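(* Let $p$ be an even positive integer. Then there exists a unique (up to isomorphism) graph of order $p+2$ and size $\mathrm{ex}(p+2,B_p)+1$ which contains exactly one copy of $B_p$, and there exists a unique (up to isomorphism) graph of order $p+3$ and size $\mathrm{ex}(p+3,B_p)+1$ which contains exactly one copy of $B_p$.
   Context: All graphs are finite and simple. The order of a graph is its number of vertices and its size is its number of edges. A copy of $H$ in $G$ is a subgraph of $G$ isomorphic to $H$; the number of copies of $H$ in $G$ is the number of distinct subgraphs of $G$ isomorphic to $H$. For a graph $H$ and a positive integer $n$, the Turán number $\mathrm{ex}(n,H)$ is the maximum size of a simple graph of order $n$ containing no copy of $H$. The book $B_p$ with $p$ pages is the graph consisting of $p$ triangles sharing a common edge (so $B_p$ has $p+2$ vertices and $2p+1$ edges). *)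

theory Defs
  imports Main
begin

definition graph :: "'a set \<Rightarrow> 'a set set \<Rightarrow> bool" where
  "graph V E \<longleftrightarrow> finite V \<and> E \<subseteq> {{x, y} | x y. x \<in> V \<and> y \<in> V \<and> x \<noteq> y}"

definition graph_iso :: "'a set \<Rightarrow> 'a set set \<Rightarrow> 'b set \<Rightarrow> 'b set set \<Rightarrow> bool" where
  "graph_iso V1 E1 V2 E2 \<longleftrightarrow>
     (\<exists>f. bij_betw f V1 V2 \<and>
          (\<forall>x\<in>V1. \<forall>y\<in>V1. {x, y} \<in> E1 \<longleftrightarrow> {f x, f y} \<in> E2))"

definition copies :: "'b set \<Rightarrow> 'b set set \<Rightarrow> 'a set \<Rightarrow> 'a set set \<Rightarrow> ('a set \<times> 'a set set) set" where
  "copies VH EH V E = {(W, F). W \<subseteq> V \<and> F \<subseteq> E \<and> graph W F \<and> graph_iso W F VH EH}"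

definition num_copies :: "'b set \<Rightarrow> 'b set set \<Rightarrow> 'a set \<Rightarrow> 'a set set \<Rightarrow> nat" where
  "num_copies VH EH V E = card (copies VH EH V E)"

definition ex :: "nat \<Rightarrow> 'b set \<Rightarrow> 'b set set \<Rightarrow> nat" where
  "ex n VH EH = Max {card E | E. graph {0..<n} E \<and> copies VH EH {0..<n} E = {}}"

text \<open>The book B_p: vertices 0..p+1, spine edge {0,1}, pages {0,i},{1,i} for 2 \<le> i \<le> p+1.\<close>
definition book_V :: "nat \<Rightarrow> nat set" where
  "book_V p = {0..<p+2}"

definition book_E :: "nat \<Rightarrow> nat set set" where
  "book_E p = insert {0, 1} ({{0, i} | i. i \<in> {2..<p+2}} \<union> {{1, i} | i. i \<in> {2..<p+2}})"

definition extremal_one_book :: "nat \<Rightarrow> nat \<Rightarrow> 'a set \<Rightarrow> 'a set set \<Rightarrow> bool" where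
  "extremal_one_book p n V E \<longleftrightarrow>
     graph V E \<and> card V = n \<and> card E = ex n (book_V p) (book_E p) + 1 \<and>
     num_copies (book_V p) (book_E p) V E = 1"

end

theory Submission
  imports Defs
begin

text \<open>Everything is phrased in terms of the set \<open>H\<close> of missing edges. A copy of \<open>B\<^sub>p\<close> with
  spine \<open>uv\<close> exists iff \<open>uv \<notin> H\<close> and at least \<open>p\<close> further vertices are \<open>H\<close>-adjacent to neither
  \<open>u\<close> nor \<open>v\<close>. Write \<open>p = 2k\<close>.

  On \<open>p + 2\<close> vertices this forbids two \<open>H\<close>-isolated vertices, so a \<open>B\<^sub>p\<close>-free graph misses at
  least \<open>k + 1\<close> edges (a perfect matching attains this). If only \<open>k\<close> edges are missing, \<open>H\<close> has
  at least two isolated vertices; a third one would give a second spine, so there are exactly two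
  and degree counting makes \<open>H\<close> a perfect matching of the other \<open>2k\<close> vertices.

  On \<open>p + 3\<close> vertices every non-edge of \<open>H\<close> needs at least two \<open>H\<close>-neighbours at its ends;
  degree counting then gives at least \<open>k + 3\<close> missing edges (a triangle plus a matching attains
  this). With \<open>k + 2\<close> missing edges and a single copy, \<open>H\<close> has no isolated vertex, the degree sum
  exceeds the number of vertices by one, and \<open>H\<close> is a path \<open>a, x, c\<close> plus a perfect matching,
  the unique spine being \<open>ac\<close>.

  In both cases \<open>H\<close>, hence the graph, is unique up to isomorphism.\<close>

section \<open>Complete edge sets and neighbourhoods\<close>

definition complete_edges :: "'a set \<Rightarrow> 'a set set" where
  "complete_edges V = {{x, y} | x y. x \<in> V \<and> y \<in> V \<and> x \<noteq> y}"

lemma doubleton_in_complete_edges [simp]: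
  "{x, y} \<in> complete_edges V \<longleftrightarrow> x \<in> V \<and> y \<in> V \<and> x \<noteq> y"
  unfolding complete_edges_def by (auto simp: doubleton_eq_iff)

lemma singleton_notin_complete_edges [simp]: "{x} \<notin> complete_edges V"
  using doubleton_in_complete_edges[of x x V] by simp

lemma complete_edges_eq: "complete_edges V = {e. e \<subseteq> V \<and> card e = 2}"
  unfolding complete_edges_def by (auto simp: card_2_iff)

lemma finite_complete_edges: "finite V \<Longrightarrow> finite (complete_edges V)"
  unfolding complete_edges_eq by (rule finite_subset[of _ "Pow V"]) auto

lemma card_complete_edges: "finite V \<Longrightarrow> card (complete_edges V) = card V choose 2"
  by (simp add: complete_edges_eq n_subsets)

lemma graph_iff_subset_complete_edges: "graph V E \<longleftrightarrow> finite V \<and> E \<subseteq> complete_edges V"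
  unfolding graph_def complete_edges_def by simp

lemma graph_complete_edges_Diff:
  "finite V \<Longrightarrow> graph V (complete_edges V - H)"
  by (simp add: graph_iff_subset_complete_edges)

lemma card_complete_edges_Diff:
  assumes "finite V" "H \<subseteq> complete_edges V"
  shows "card (complete_edges V - H) = (card V choose 2) - card H"
  using assms by (simp add: card_Diff_subset finite_subset finite_complete_edges card_complete_edges)

lemma card_le_choose_2: "finite V \<Longrightarrow> H \<subseteq> complete_edges V \<Longrightarrow> card H \<le> card V choose 2"
  using card_mono[OF finite_complete_edges] card_complete_edges by metis

lemma complete_edges_eqI:
  assumes "E1 \<subseteq> complete_edges V" "E2 \<subseteq> complete_edges V"
    and "\<And>x y. x \<in> V \<Longrightarrow> y \<in> V \<Longrightarrow> {x, y} \<in> E1 \<longleftrightarrow> {x, y} \<in> E2"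
  shows "E1 = E2"
  using assms unfolding complete_edges_def by blast

lemma complete_edges_mono: "A \<subseteq> B \<Longrightarrow> complete_edges A \<subseteq> complete_edges B"
  unfolding complete_edges_def by blast

definition nbhd :: "'a set set \<Rightarrow> 'a set \<Rightarrow> 'a \<Rightarrow> 'a set" where
  "nbhd H V x = {y \<in> V. {x, y} \<in> H}"

lemma mem_nbhd: "y \<in> nbhd H V x \<longleftrightarrow> y \<in> V \<and> {x, y} \<in> H"
  unfolding nbhd_def by simp

lemma finite_nbhd: "finite V \<Longrightarrow> finite (nbhd H V x)"
  unfolding nbhd_def by simp

lemma nbhd_subset: "H \<subseteq> complete_edges V \<Longrightarrow> nbhd H V x \<subseteq> V - {x}"
  unfolding nbhd_def by auto

lemma nbhd_sym: "x \<in> V \<Longrightarrow> y \<in> nbhd H V x \<longleftrightarrow> x \<in> nbhd H V y \<and> y \<in> V"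
  unfolding nbhd_def by (auto simp: insert_commute)

lemma card_nbhd_eq_card_incident:
  assumes "H \<subseteq> complete_edges V" "x \<in> V"
  shows "card (nbhd H V x) = card {e \<in> H. x \<in> e}"
proof -
  have "bij_betw (\<lambda>y. {x, y}) (nbhd H V x) {e \<in> H. x \<in> e}"
  proof (rule bij_betwI')
    fix e assume "e \<in> {e \<in> H. x \<in> e}"
    then obtain y where "e = {x, y}" "y \<in> V"
      using assms(1) unfolding complete_edges_def by (auto simp: insert_commute)
    then show "\<exists>y\<in>nbhd H V x. e = {x, y}"
      using \<open>e \<in> {e \<in> H. x \<in> e}\<close> by (auto simp: mem_nbhd)
  qed (auto simp: mem_nbhd doubleton_eq_iff)
  then show ?thesis by (rule bij_betw_same_card)
qed

lemma sum_card_nbhd: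
  assumes "finite V" "H \<subseteq> complete_edges V"
  shows "(\<Sum>x\<in>V. card (nbhd H V x)) = 2 * card H"
proof -
  have fin: "finite H" using assms finite_complete_edges finite_subset by blast
  have "(\<Sum>x\<in>V. card (nbhd H V x)) = (\<Sum>x\<in>V. \<Sum>e\<in>H. of_bool (x \<in> e))"
    using card_nbhd_eq_card_incident[OF assms(2)] fin by (simp add: Int_def conj_commute)
  also have "\<dots> = (\<Sum>e\<in>H. \<Sum>x\<in>V. of_bool (x \<in> e))"
    by (rule sum.swap)
  also have "\<dots> = (\<Sum>e\<in>H. 2)"
  proof (rule sum.cong)
    fix e assume "e \<in> H"
    then have "V \<inter> {x. x \<in> e} = e" "card e = 2" using assms(2) by (auto simp: complete_edges_eq)
    then show "(\<Sum>x\<in>V. of_bool (x \<in> e)) = (2::nat)" using assms(1) by simp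
  qed simp
  finally show ?thesis by simp
qed

lemma two_le_card_of_mem: "finite X \<Longrightarrow> a \<in> X \<Longrightarrow> b \<in> X \<Longrightarrow> a \<noteq> b \<Longrightarrow> 2 \<le> card X"
  using card_mono[of X "{a, b}"] by simp

lemma card_eq_1_imp_eq: "card A = 1 \<Longrightarrow> a \<in> A \<Longrightarrow> b \<in> A \<Longrightarrow> a = b"
  by (metis One_nat_def card_1_singleton_iff singletonD)

section \<open>Copies of books\<close>

definition book_edges :: "'a \<Rightarrow> 'a \<Rightarrow> 'a set \<Rightarrow> 'a set set" where
  "book_edges u v S = insert {u, v} ((\<lambda>w. {u, w}) ` S \<union> (\<lambda>w. {v, w}) ` S)"

lemma doubleton_in_image_doubleton:
  "{x, y} \<in> (\<lambda>w. {u, w}) ` S \<longleftrightarrow> (x = u \<and> y \<in> S) \<or> (y = u \<and> x \<in> S)"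
  by (auto simp: doubleton_eq_iff)

lemma mem_book_edges:
  "{x, y} \<in> book_edges u v S \<longleftrightarrow>
     {x, y} = {u, v} \<or> (x = u \<and> y \<in> S) \<or> (y = u \<and> x \<in> S) \<or> (x = v \<and> y \<in> S) \<or> (y = v \<and> x \<in> S)"
  unfolding book_edges_def by (simp add: doubleton_in_image_doubleton)

lemma book_E_eq_book_edges: "book_E p = book_edges 0 1 {2..<p+2}"
  unfolding book_E_def book_edges_def by auto

lemma book_edges_image:
  assumes inj: "inj_on f (insert u (insert v S))"
    and "x \<in> insert u (insert v S)" "y \<in> insert u (insert v S)"
  shows "{f x, f y} \<in> book_edges (f u) (f v) (f ` S) \<longleftrightarrow> {x, y} \<in> book_edges u v S"
proof -
  let ?W = "insert u (insert v S)"
  have eq: "f a = f b \<longleftrightarrow> a = b" if "a \<in> ?W" "b \<in> ?W" for a b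
    using inj that by (rule inj_on_eq_iff)
  have img: "f a \<in> f ` S \<longleftrightarrow> a \<in> S" if "a \<in> ?W" for a
    using inj_on_image_mem_iff[OF inj that] by blast
  show ?thesis using assms(2,3)
    unfolding mem_book_edges doubleton_eq_iff by (simp add: eq img)
qed

lemma book_edges_commute: "book_edges u v S = book_edges v u S"
  unfolding book_edges_def by (auto simp: insert_commute)

lemma book_edges_subset_complete_edges:
  assumes "u \<noteq> v" "u \<notin> S" "v \<notin> S"
  shows "book_edges u v S \<subseteq> complete_edges (insert u (insert v S))"
  using assms unfolding book_edges_def by auto

text \<open>The bound \<open>2 \<le> card S\<close> is needed: the spine of the triangle \<open>B\<^sub>1\<close> is not determined.\<close>

lemma book_edges_determine_spine:
  assumes eq: "book_edges u v S = book_edges u' v' S'"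
    and "u \<noteq> v" "u \<notin> S" "v \<notin> S" "u' \<noteq> v'" "finite S" "2 \<le> card S"
  shows "{u, v} = {u', v'}"
proof -
  have in_spine: "b \<in> {u', v'}"
    if eq: "book_edges a b S = book_edges u' v' S'" and "a \<notin> S" "b \<notin> S" for a b
  proof (rule ccontr)
    assume b: "b \<notin> {u', v'}"
    show False
    proof (cases "S \<subseteq> {u', v'}")
      case True
      have "card {u', v'} \<le> card S" using \<open>u' \<noteq> v'\<close> \<open>2 \<le> card S\<close> by simp
      then have "S = {u', v'}" using True by (intro card_seteq) auto
      moreover have "{u', v'} \<in> book_edges a b S" using eq by (simp add: mem_book_edges)
      ultimately show False using b \<open>a \<notin> S\<close> \<open>b \<notin> S\<close> by (auto simp: mem_book_edges doubleton_eq_iff)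
    next
      case False
      then obtain z where "z \<in> S" "z \<notin> {u', v'}" by blast
      then have "{b, z} \<in> book_edges a b S" by (simp add: mem_book_edges)
      then show False using eq b \<open>z \<notin> {u', v'}\<close> by (auto simp: mem_book_edges doubleton_eq_iff)
    qed
  qed
  have "v \<in> {u', v'}" using in_spine[OF eq] assms by blast
  moreover have "u \<in> {u', v'}" using in_spine[of v u] eq assms by (simp add: book_edges_commute)
  ultimately show ?thesis using \<open>u \<noteq> v\<close> \<open>u' \<noteq> v'\<close> by auto
qed

lemma bij_betw_fun_upd_insert:
  assumes "bij_betw f A B" "a \<notin> A" "b \<notin> B"
  shows "bij_betw (f(a := b)) (insert a A) (insert b B)"
proof -
  have "bij_betw (f(a := b)) A B" using assms(1,2) by (metis bij_betw_cong fun_upd_other)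
  then show ?thesis using notIn_Un_bij_betw3[of a A "f(a := b)" B] assms by simp
qed

lemma graph_iso_book_edges:
  assumes "u \<noteq> v" "u \<notin> S" "v \<notin> S" "finite S" "card S = p"
  shows "graph_iso (insert u (insert v S)) (book_edges u v S) (book_V p) (book_E p)"
proof -
  obtain h where h: "bij_betw h S {2..<p+2}"
    using finite_same_card_bij[OF \<open>finite S\<close>, of "{2..<p+2}"] assms by auto
  define f where "f = h(v := 1, u := 0)"
  have "bij_betw (h(v := 1)) (insert v S) (insert 1 {2..<p+2})"
    using assms by (intro bij_betw_fun_upd_insert[OF h]) auto
  then have "bij_betw f (insert u (insert v S)) (insert 0 (insert 1 {2..<p+2}))"
    unfolding f_def by (rule bij_betw_fun_upd_insert) (use assms in auto)
  moreover have "insert 0 (insert 1 {2..<p+2}) = book_V p" by (auto simp: book_V_def)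
  ultimately have bij: "bij_betw f (insert u (insert v S)) (book_V p)" by simp
  have "f ` S = h ` S" using assms by (auto simp: f_def)
  then have "book_E p = book_edges (f u) (f v) (f ` S)"
    using assms h by (simp add: f_def book_E_eq_book_edges bij_betw_def)
  then show ?thesis unfolding graph_iso_def
    using bij book_edges_image[OF bij_betw_imp_inj_on[OF bij]] by (intro exI[of _ f]) simp
qed

lemma graph_iso_book_E_imp_book_edges:
  assumes "graph W F" "graph_iso W F (book_V p) (book_E p)"
  obtains u v S where "u \<noteq> v" "u \<notin> S" "v \<notin> S" "card S = p"
    "W = insert u (insert v S)" "F = book_edges u v S"
proof -
  obtain f where bij: "bij_betw f W (book_V p)"
    and edges: "\<forall>x\<in>W. \<forall>y\<in>W. {x, y} \<in> F \<longleftrightarrow> {f x, f y} \<in> book_E p"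
    using assms(2) unfolding graph_iso_def by blast
  define g where "g = inv_into W f"
  define S where "S = g ` {2..<p+2}"
  have B: "book_V p = insert 0 (insert 1 {2..<p+2})" by (auto simp: book_V_def)
  have g: "bij_betw g (book_V p) W" unfolding g_def by (rule bij_betw_inv_into[OF bij])
  then have inj: "inj_on g (insert 0 (insert 1 {2..<p+2}))" by (metis B bij_betw_imp_inj_on)
  have "W = g ` book_V p" using g by (simp add: bij_betw_def)
  also have "\<dots> = insert (g 0) (insert (g 1) S)" unfolding B S_def by (simp only: image_insert)
  finally have W: "W = insert (g 0) (insert (g 1) S)" .
  have "{2..<p+2} \<subseteq> insert 0 (insert 1 {2..<p+2})" by blast
  from inj_on_image_mem_iff[OF inj _ this]
  have notin: "g 0 \<notin> S" "g 1 \<notin> S" unfolding S_def by simp_all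
  have card: "card S = p"
    unfolding S_def using inj by (simp add: card_image inj_on_insert)
  have "F = book_edges (g 0) (g 1) S"
  proof (rule complete_edges_eqI)
    show "F \<subseteq> complete_edges W" using assms(1) by (simp add: graph_iff_subset_complete_edges)
    show "book_edges (g 0) (g 1) S \<subseteq> complete_edges W"
      unfolding W using inj notin by (intro book_edges_subset_complete_edges) auto
    fix x y assume "x \<in> W" "y \<in> W"
    then have "f x \<in> book_V p" "f y \<in> book_V p" "g (f x) = x" "g (f y) = y"
      using bij by (auto simp: g_def bij_betw_def bij_betw_inv_into_left)
    then show "{x, y} \<in> F \<longleftrightarrow> {x, y} \<in> book_edges (g 0) (g 1) S"
      using edges \<open>x \<in> W\<close> \<open>y \<in> W\<close> book_edges_image[OF inj, of "f x" "f y"]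
      by (simp add: B S_def book_E_eq_book_edges)
  qed
  then show ?thesis using that inj W notin card by auto
qed

lemma mem_copies_book:
  assumes "finite V"
  shows "(W, F) \<in> copies (book_V p) (book_E p) V E \<longleftrightarrow>
    (\<exists>u v S. u \<in> V \<and> v \<in> V \<and> u \<noteq> v \<and> S \<subseteq> V - {u, v} \<and> card S = p \<and>
       book_edges u v S \<subseteq> E \<and> W = insert u (insert v S) \<and> F = book_edges u v S)"
proof
  assume "(W, F) \<in> copies (book_V p) (book_E p) V E"
  then have sub: "W \<subseteq> V" "F \<subseteq> E" and "graph W F" "graph_iso W F (book_V p) (book_E p)"
    by (auto simp: copies_def)
  then obtain u v S where "u \<noteq> v" "u \<notin> S" "v \<notin> S" "card S = p"
    "W = insert u (insert v S)" "F = book_edges u v S"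
    by (elim graph_iso_book_E_imp_book_edges)
  with sub show "\<exists>u v S. u \<in> V \<and> v \<in> V \<and> u \<noteq> v \<and> S \<subseteq> V - {u, v} \<and> card S = p \<and>
       book_edges u v S \<subseteq> E \<and> W = insert u (insert v S) \<and> F = book_edges u v S"
    by blast
next
  assume "\<exists>u v S. u \<in> V \<and> v \<in> V \<and> u \<noteq> v \<and> S \<subseteq> V - {u, v} \<and> card S = p \<and>
       book_edges u v S \<subseteq> E \<and> W = insert u (insert v S) \<and> F = book_edges u v S"
  then obtain u v S where uvS: "u \<in> V" "v \<in> V" "u \<noteq> v" "S \<subseteq> V - {u, v}" "card S = p"
    "book_edges u v S \<subseteq> E" "W = insert u (insert v S)" "F = book_edges u v S" by blast
  have "finite S" "u \<notin> S" "v \<notin> S" using uvS(4) assms finite_subset by auto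
  then have "graph W F" "graph_iso W F (book_V p) (book_E p)"
    using uvS(3,5,7,8) book_edges_subset_complete_edges[of u v S] graph_iso_book_edges[of u v S p]
    by (simp_all add: graph_iff_subset_complete_edges)
  moreover have "W \<subseteq> V" "F \<subseteq> E" using uvS by auto
  ultimately show "(W, F) \<in> copies (book_V p) (book_E p) V E"
    by (simp add: copies_def)
qed

section \<open>Spines of books in the complement\<close>

abbreviation book_copies :: "nat \<Rightarrow> 'a set \<Rightarrow> 'a set set \<Rightarrow> ('a set \<times> 'a set set) set" where
  "book_copies p V H \<equiv> copies (book_V p) (book_E p) V (complete_edges V - H)"

text \<open>The pages must avoid the \<open>H\<close>-neighbours of both spine vertices.\<close>

definition book_spine :: "nat \<Rightarrow> 'a set \<Rightarrow> 'a set set \<Rightarrow> 'a \<Rightarrow> 'a \<Rightarrow> bool" where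
  "book_spine p V H u v \<longleftrightarrow> u \<in> V \<and> v \<in> V \<and> u \<noteq> v \<and> {u, v} \<notin> H \<and>
     card (nbhd H V u \<union> nbhd H V v) + p + 2 \<le> card V"

lemma book_edges_disjoint_iff:
  "book_edges u v S \<inter> H = {} \<longleftrightarrow> {u, v} \<notin> H \<and> (\<forall>w\<in>S. {u, w} \<notin> H \<and> {v, w} \<notin> H)"
  unfolding book_edges_def by blast

lemma book_edges_subset_complement_iff:
  assumes "u \<in> V" "v \<in> V" "u \<noteq> v" "S \<subseteq> V - {u, v}"
  shows "book_edges u v S \<subseteq> complete_edges V - H \<longleftrightarrow>
    {u, v} \<notin> H \<and> S \<inter> (nbhd H V u \<union> nbhd H V v) = {}"
proof -
  have "book_edges u v S \<subseteq> complete_edges V"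
    using book_edges_subset_complete_edges[of u v S] complete_edges_mono[of "insert u (insert v S)" V]
      assms by blast
  then have "book_edges u v S \<subseteq> complete_edges V - H \<longleftrightarrow> book_edges u v S \<inter> H = {}" by blast
  also have "\<dots> \<longleftrightarrow> {u, v} \<notin> H \<and> S \<inter> (nbhd H V u \<union> nbhd H V v) = {}"
    using assms(4) unfolding book_edges_disjoint_iff nbhd_def by blast
  finally show ?thesis .
qed

lemma copy_of_book_spine:
  assumes "finite V" "u \<in> V" "v \<in> V" "u \<noteq> v" "{u, v} \<notin> H"
    and "S \<subseteq> V - {u, v} - (nbhd H V u \<union> nbhd H V v)" "card S = p"
  shows "(insert u (insert v S), book_edges u v S) \<in> book_copies p V H"
proof -
  have "S \<subseteq> V - {u, v}" "book_edges u v S \<subseteq> complete_edges V - H"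
    using assms book_edges_subset_complement_iff[of u V v S H] by blast+
  then show ?thesis unfolding mem_copies_book[OF assms(1)] using assms by blast
qed

lemma card_outside_nbhds:
  assumes "finite V" "H \<subseteq> complete_edges V" "u \<in> V" "v \<in> V" "u \<noteq> v" "{u, v} \<notin> H"
  shows "card (V - {u, v} - (nbhd H V u \<union> nbhd H V v)) + card (nbhd H V u \<union> nbhd H V v) + 2
    = card V"
proof -
  have "nbhd H V u \<union> nbhd H V v \<subseteq> V - {u, v}"
    using nbhd_subset[OF assms(2)] assms(6) by (auto simp: mem_nbhd insert_commute)
  moreover have "card (V - {u, v}) + 2 = card V"
    using assms card_mono[OF assms(1), of "{u, v}"] by (simp add: card_Diff_subset)
  moreover have "finite (nbhd H V u \<union> nbhd H V v)" using finite_nbhd[OF assms(1)] by blast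
  moreover have "finite (V - {u, v})" using assms(1) by blast
  ultimately show ?thesis by (metis card_Diff_subset card_mono le_add_diff_inverse2)
qed

lemma copy_imp_book_spine:
  assumes "finite V" "H \<subseteq> complete_edges V" "c \<in> book_copies p V H"
  obtains u v S where "book_spine p V H u v" "S \<subseteq> V - {u, v} - (nbhd H V u \<union> nbhd H V v)"
    "card S = p" "c = (insert u (insert v S), book_edges u v S)"
proof -
  obtain W F where c: "c = (W, F)" by fastforce
  obtain u v S where uvS: "u \<in> V" "v \<in> V" "u \<noteq> v" "S \<subseteq> V - {u, v}" "card S = p"
    "book_edges u v S \<subseteq> complete_edges V - H" "c = (insert u (insert v S), book_edges u v S)"
    using assms(3) unfolding c mem_copies_book[OF assms(1)] by blast
  then have H: "{u, v} \<notin> H" and S: "S \<subseteq> V - {u, v} - (nbhd H V u \<union> nbhd H V v)"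
    using book_edges_subset_complement_iff[of u V v S H] by blast+
  have "card S \<le> card (V - {u, v} - (nbhd H V u \<union> nbhd H V v))"
    using S assms(1) by (intro card_mono) auto
  then have "book_spine p V H u v"
    using card_outside_nbhds[OF assms(1,2) uvS(1-3) H] uvS H by (simp add: book_spine_def)
  then show ?thesis using that S uvS by blast
qed

lemma book_spine_imp_copy:
  assumes "finite V" "H \<subseteq> complete_edges V" "book_spine p V H u v"
  obtains S where "S \<subseteq> V - {u, v} - (nbhd H V u \<union> nbhd H V v)" "card S = p"
    "(insert u (insert v S), book_edges u v S) \<in> book_copies p V H"
proof -
  have uv: "u \<in> V" "v \<in> V" "u \<noteq> v" "{u, v} \<notin> H"
    using assms(3) by (auto simp: book_spine_def)
  have "p \<le> card (V - {u, v} - (nbhd H V u \<union> nbhd H V v))"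
    using card_outside_nbhds[OF assms(1,2) uv] assms(3) by (simp add: book_spine_def)
  then obtain S where "S \<subseteq> V - {u, v} - (nbhd H V u \<union> nbhd H V v)" "card S = p"
    by (meson obtain_subset_with_card_n)
  then show ?thesis using that copy_of_book_spine[OF assms(1) uv] by blast
qed

lemma book_copies_eq_empty_iff:
  assumes "finite V" "H \<subseteq> complete_edges V"
  shows "book_copies p V H = {} \<longleftrightarrow> (\<forall>u v. \<not> book_spine p V H u v)"
proof
  show "\<forall>u v. \<not> book_spine p V H u v" if "book_copies p V H = {}"
    using book_spine_imp_copy[OF assms] that by blast
  show "book_copies p V H = {}" if "\<forall>u v. \<not> book_spine p V H u v"
    using copy_imp_book_spine[OF assms] that by blast
qed

lemma book_spine_unique:
  assumes "finite V" "H \<subseteq> complete_edges V" "card (book_copies p V H) = 1" "2 \<le> p"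
    and "book_spine p V H u v" "book_spine p V H u' v'"
  shows "{u, v} = {u', v'}"
proof -
  obtain S where S: "S \<subseteq> V - {u, v} - (nbhd H V u \<union> nbhd H V v)" "card S = p"
    and c: "(insert u (insert v S), book_edges u v S) \<in> book_copies p V H"
    by (rule book_spine_imp_copy[OF assms(1,2,5)])
  obtain S' where c': "(insert u' (insert v' S'), book_edges u' v' S') \<in> book_copies p V H"
    by (rule book_spine_imp_copy[OF assms(1,2,6)])
  have "book_edges u v S = book_edges u' v' S'"
    using card_eq_1_imp_eq[OF assms(3) c c'] by simp
  moreover have "finite S" using S(1) assms(1) finite_subset by blast
  moreover have "u \<noteq> v" "u' \<noteq> v'" using assms(5,6) by (simp_all add: book_spine_def)
  ultimately show ?thesis
    using book_edges_determine_spine[of u v S u' v' S'] assms(4) S by auto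
qed

lemma book_spine_tight:
  assumes "finite V" "H \<subseteq> complete_edges V" "card (book_copies p V H) = 1" "0 < p"
    and spine: "book_spine p V H u v"
  shows "card (nbhd H V u \<union> nbhd H V v) + p + 2 = card V"
proof (rule ccontr)
  assume ne: "card (nbhd H V u \<union> nbhd H V v) + p + 2 \<noteq> card V"
  have uv: "u \<in> V" "v \<in> V" "u \<noteq> v" "{u, v} \<notin> H"
    using spine by (simp_all add: book_spine_def)
  have "book_spine (Suc p) V H u v"
    using spine ne unfolding book_spine_def by linarith
  then obtain T where T: "T \<subseteq> V - {u, v} - (nbhd H V u \<union> nbhd H V v)" "card T = Suc p"
    by (rule book_spine_imp_copy[OF assms(1,2)])
  have "finite T" "\<not> card T \<le> Suc 0" using T(2) assms(4) card.infinite by fastforce+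
  then obtain a b where ab: "a \<in> T" "b \<in> T" "a \<noteq> b"
    using card_le_Suc0_iff_eq by blast
  have copy: "(insert u (insert v (T - {x})), book_edges u v (T - {x})) \<in> book_copies p V H"
    if "x \<in> T" for x
    using copy_of_book_spine[OF assms(1) uv, of "T - {x}" p] T that by auto
  have "insert u (insert v (T - {a})) \<noteq> insert u (insert v (T - {b}))"
    using T ab by auto
  then show False using card_eq_1_imp_eq[OF assms(3) copy[OF ab(1)] copy[OF ab(2)]] by blast
qed

lemma card_book_copies_eq_1:
  assumes "finite V" "H \<subseteq> complete_edges V" "book_spine p V H u v"
    and unique: "\<And>u' v'. book_spine p V H u' v' \<Longrightarrow> {u', v'} = {u, v}"
    and tight: "card (nbhd H V u \<union> nbhd H V v) + p + 2 = card V"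
  shows "card (book_copies p V H) = 1"
proof -
  define R where "R = V - {u, v} - (nbhd H V u \<union> nbhd H V v)"
  have uv: "u \<in> V" "v \<in> V" "u \<noteq> v" "{u, v} \<notin> H"
    using assms(3) by (simp_all add: book_spine_def)
  have card_R: "card R = p" using card_outside_nbhds[OF assms(1,2) uv] tight R_def by simp
  have "c = (insert u (insert v R), book_edges u v R)" if copy: "c \<in> book_copies p V H" for c
  proof -
    obtain u' v' S where spine': "book_spine p V H u' v'"
      and S: "S \<subseteq> V - {u', v'} - (nbhd H V u' \<union> nbhd H V v')" "card S = p"
      and c: "c = (insert u' (insert v' S), book_edges u' v' S)"
      by (rule copy_imp_book_spine[OF assms(1,2) copy])
    have uv': "u' = u \<and> v' = v \<or> u' = v \<and> v' = u"
      using unique[OF spine'] by (auto simp: doubleton_eq_iff)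
    then have "S \<subseteq> R" using S(1) unfolding R_def by (auto simp: insert_commute)
    moreover have "finite R" using assms(1) R_def by simp
    ultimately have "S = R" using S(2) card_R by (simp add: card_subset_eq)
    then show ?thesis using c uv' by (auto simp: insert_commute book_edges_commute)
  qed
  moreover have "(insert u (insert v R), book_edges u v R) \<in> book_copies p V H"
    using copy_of_book_spine[OF assms(1) uv _ card_R] R_def by simp
  ultimately have "book_copies p V H = {(insert u (insert v R), book_edges u v R)}" by blast
  then show ?thesis by simp
qed

section \<open>Degree counting\<close>

lemma sum_eq_sum_pred_plus_card:
  fixes f :: "'a \<Rightarrow> nat"
  assumes "\<And>y. y \<in> A \<Longrightarrow> 1 \<le> f y"
  shows "sum f A = (\<Sum>y\<in>A. f y - 1) + card A"
proof -
  have "sum f A = (\<Sum>y\<in>A. (f y - 1) + 1)" using assms by (intro sum.cong) (auto simp: Suc_le_eq)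
  then show ?thesis by (simp add: sum_Suc)
qed

lemma sum_eq_card_imp_all_eq_1:
  fixes f :: "'a \<Rightarrow> nat"
  assumes "finite A" "\<And>y. y \<in> A \<Longrightarrow> 1 \<le> f y" "sum f A = card A" "x \<in> A"
  shows "f x = 1"
proof -
  have "(\<Sum>y\<in>A. f y - 1) = 0" using sum_eq_sum_pred_plus_card[of A f] assms(2,3) by simp
  then have "f x - 1 = 0" using assms(1,4) by simp
  then show ?thesis using assms(2)[OF assms(4)] by simp
qed

lemma sum_eq_Suc_card_obtain:
  fixes f :: "'a \<Rightarrow> nat"
  assumes "finite A" "\<And>y. y \<in> A \<Longrightarrow> 1 \<le> f y" "sum f A = Suc (card A)"
  obtains x where "x \<in> A" "f x = 2" "\<And>y. y \<in> A \<Longrightarrow> y \<noteq> x \<Longrightarrow> f y = 1"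
proof -
  have "(\<Sum>y\<in>A. f y - 1) = 1" using sum_eq_sum_pred_plus_card[of A f] assms(2,3) by simp
  then obtain x where x: "x \<in> A" "f x - 1 = 1" and rest: "\<forall>y\<in>A. x \<noteq> y \<longrightarrow> f y - 1 = 0"
    unfolding sum_eq_1_iff[OF assms(1)] by blast
  have "f y = 1" if "y \<in> A" "y \<noteq> x" for y
    using rest assms(2)[OF that(1)] that by fastforce
  moreover have "f x = 2" using x(2) by simp
  ultimately show ?thesis using that x(1) by blast
qed

definition isolated :: "'a set set \<Rightarrow> 'a set \<Rightarrow> 'a set" where
  "isolated H V = {x \<in> V. nbhd H V x = {}}"

lemma one_le_card_nbhd:
  "finite V \<Longrightarrow> x \<in> V - isolated H V \<Longrightarrow> 1 \<le> card (nbhd H V x)"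
  unfolding isolated_def using finite_nbhd[of V H x] by (simp add: Suc_le_eq card_gt_0_iff)

lemma sum_card_nbhd_non_isolated:
  assumes "finite V" "H \<subseteq> complete_edges V"
  shows "(\<Sum>x\<in>V - isolated H V. card (nbhd H V x)) = 2 * card H"
proof -
  have "(\<Sum>x\<in>V - isolated H V. card (nbhd H V x)) = (\<Sum>x\<in>V. card (nbhd H V x))"
    using assms(1) by (intro sum.mono_neutral_left) (auto simp: isolated_def)
  then show ?thesis using sum_card_nbhd[OF assms] by simp
qed

lemma card_non_isolated_le:
  assumes "finite V" "H \<subseteq> complete_edges V"
  shows "card (V - isolated H V) \<le> 2 * card H"
  using sum_eq_sum_pred_plus_card[of "V - isolated H V" "\<lambda>x. card (nbhd H V x)"]
    one_le_card_nbhd[OF assms(1)] sum_card_nbhd_non_isolated[OF assms] by simp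

lemma book_spine_of_isolated:
  assumes "u \<in> isolated H V" "v \<in> isolated H V" "u \<noteq> v" "p + 2 \<le> card V"
  shows "book_spine p V H u v"
proof -
  have "nbhd H V u = {}" "nbhd H V v = {}" "u \<in> V" "v \<in> V"
    using assms(1,2) by (auto simp: isolated_def)
  then show ?thesis using assms(3,4) by (auto simp: book_spine_def mem_nbhd)
qed

lemma nbhd_eq_singleton_of_mem:
  assumes "H \<subseteq> complete_edges V" "x \<in> V" "a \<in> nbhd H V x" "card (nbhd H V a) = 1"
  shows "nbhd H V a = {x}"
  using assms nbhd_sym[of x V a H] by (metis card_1_singletonE singletonD)

lemma degree_sum_Suc_card_imp_cherry:
  assumes "finite V" "H \<subseteq> complete_edges V" "isolated H V = {}" "2 * card H = Suc (card V)"
  obtains x a c where "x \<in> V" "a \<in> V" "c \<in> V" "a \<noteq> c" "x \<noteq> a" "x \<noteq> c"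
    "nbhd H V x = {a, c}" "nbhd H V a = {x}" "nbhd H V c = {x}"
    "\<And>y. y \<in> V - {x, a, c} \<Longrightarrow> card (nbhd H V y) = 1"
proof -
  have deg: "\<And>y. y \<in> V \<Longrightarrow> 1 \<le> card (nbhd H V y)"
    using one_le_card_nbhd[OF assms(1)] assms(3) by blast
  have "(\<Sum>y\<in>V. card (nbhd H V y)) = Suc (card V)"
    using sum_card_nbhd[OF assms(1,2)] assms(4) by simp
  then obtain x where x: "x \<in> V" "card (nbhd H V x) = 2"
    and others: "\<And>y. y \<in> V \<Longrightarrow> y \<noteq> x \<Longrightarrow> card (nbhd H V y) = 1"
    using sum_eq_Suc_card_obtain[of V "\<lambda>y. card (nbhd H V y)"] assms(1) deg by blast
  obtain a c where ac: "nbhd H V x = {a, c}" "a \<noteq> c" using x(2) card_2_iff by metis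
  then have "a \<in> V" "c \<in> V" "a \<noteq> x" "c \<noteq> x" using nbhd_subset[OF assms(2), of x] by auto
  moreover have "nbhd H V a = {x}" "nbhd H V c = {x}"
    using nbhd_eq_singleton_of_mem[OF assms(2) x(1)] ac others calculation by auto
  ultimately show ?thesis using that x(1) ac others by auto
qed

section \<open>Missing edges of graphs with at most one book\<close>

lemma card_isolated_le_1_of_book_free:
  assumes "finite V" "H \<subseteq> complete_edges V" "card V = p + 2" "book_copies p V H = {}"
  shows "card (isolated H V) \<le> 1"
proof -
  have "u = v" if "u \<in> isolated H V" "v \<in> isolated H V" for u v
  proof (rule ccontr)
    assume "u \<noteq> v"
    with that have "book_spine p V H u v" by (rule book_spine_of_isolated) (simp add: assms(3))
    then show False using assms(4) book_copies_eq_empty_iff[OF assms(1,2)] by blast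
  qed
  moreover have "finite (isolated H V)" using assms(1) by (simp add: isolated_def)
  ultimately show ?thesis by (simp add: card_le_Suc0_iff_eq)
qed

lemma book_free_even_order_card_ge:
  assumes "finite V" "H \<subseteq> complete_edges V" "card V = p + 2" "book_copies p V H = {}"
  shows "card V \<le> Suc (2 * card H)"
proof -
  have "card (V - isolated H V) = card V - card (isolated H V)"
    by (rule card_Diff_subset) (use assms(1) in \<open>auto simp: isolated_def\<close>)
  then show ?thesis
    using card_non_isolated_le[OF assms(1,2)] card_isolated_le_1_of_book_free[OF assms] by linarith
qed

lemma one_book_even_order_structure:
  assumes "finite V" "H \<subseteq> complete_edges V" "card V = p + 2" "2 \<le> p"
    and "card (book_copies p V H) = 1" "2 * card H = p"
  obtains u v where "u \<in> V" "v \<in> V" "u \<noteq> v" "isolated H V = {u, v}"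
    "\<And>y. y \<in> V - {u, v} \<Longrightarrow> card (nbhd H V y) = 1"
proof -
  define I where "I = isolated H V"
  have I: "finite I" "I \<subseteq> V" using assms(1) by (auto simp: I_def isolated_def)
  have "card I \<le> 2"
  proof (cases "I = {}")
    case False
    then obtain u where u: "u \<in> I" by blast
    have "v = w" if "v \<in> I - {u}" "w \<in> I - {u}" for v w
    proof -
      have "book_spine p V H u v" "book_spine p V H u w"
        using u that by (auto simp: I_def assms(3) intro!: book_spine_of_isolated)
      then have "{u, v} = {u, w}" by (rule book_spine_unique[OF assms(1,2,5,4)])
      then show ?thesis using that by (auto simp: doubleton_eq_iff)
    qed
    then have "card (I - {u}) \<le> 1" using I by (simp add: card_le_Suc0_iff_eq)
    then show ?thesis using u I by (simp add: card_Diff_singleton)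
  qed simp
  have card_VI: "card (V - I) = card V - card I" using I by (simp add: card_Diff_subset)
  then have "card I = 2"
    using \<open>card I \<le> 2\<close> card_non_isolated_le[OF assms(1,2)] assms(3,6) unfolding I_def by linarith
  then obtain u v where uv: "I = {u, v}" "u \<noteq> v" by (meson card_2_iff)
  have "(\<Sum>x\<in>V - I. card (nbhd H V x)) = card (V - I)"
    using sum_card_nbhd_non_isolated[OF assms(1,2)] card_VI \<open>card I = 2\<close> assms(3,6)
    unfolding I_def by simp
  then have "card (nbhd H V y) = 1" if "y \<in> V - {u, v}" for y
    using sum_eq_card_imp_all_eq_1[of "V - I" "\<lambda>x. card (nbhd H V x)" y]
      one_le_card_nbhd[OF assms(1)] assms(1) that uv unfolding I_def by auto
  then show ?thesis using that uv I unfolding I_def by auto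
qed

lemma book_spine_even_order_imp_isolated:
  assumes "finite V" "card V = p + 2" "book_spine p V H u v"
  shows "u \<in> isolated H V" "v \<in> isolated H V"
proof -
  have "card (nbhd H V u \<union> nbhd H V v) = 0" using assms(2,3) by (simp add: book_spine_def)
  then have "nbhd H V u = {}" "nbhd H V v = {}" using finite_nbhd[OF assms(1)] by simp_all
  then show "u \<in> isolated H V" "v \<in> isolated H V" using assms(3) by (simp_all add: isolated_def book_spine_def)
qed

lemma book_free_odd_order_card_ge:
  assumes "finite V" "H \<subseteq> complete_edges V" "card V = p + 3" "even p" "2 \<le> p"
    and free: "book_copies p V H = {}"
  shows "card V + 3 \<le> 2 * card H"
proof -
  have wide: "2 \<le> card (nbhd H V u \<union> nbhd H V v)"
    if "u \<in> V" "v \<in> V" "u \<noteq> v" "{u, v} \<notin> H" for u v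
  proof (rule ccontr)
    assume "\<not> 2 \<le> card (nbhd H V u \<union> nbhd H V v)"
    then have "book_spine p V H u v" using that assms(3) by (simp add: book_spine_def)
    then show False using free book_copies_eq_empty_iff[OF assms(1,2)] by blast
  qed
  show ?thesis
  proof (cases "isolated H V = {}")
    case False
    then obtain w where w: "w \<in> V" "nbhd H V w = {}" by (auto simp: isolated_def)
    have "2 \<le> card (nbhd H V v)" if "v \<in> V - {w}" for v
      using wide[of w v] w that mem_nbhd[of v H V w] by auto
    then have "2 * card (V - {w}) \<le> (\<Sum>x\<in>V - {w}. card (nbhd H V x))"
      using sum_bounded_below[of "V - {w}" 2 "\<lambda>x. card (nbhd H V x)"] by (simp add: mult.commute)
    also have "\<dots> \<le> (\<Sum>x\<in>V. card (nbhd H V x))" using assms(1) by (intro sum_mono2) auto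
    finally show ?thesis using sum_card_nbhd[OF assms(1,2)] w(1) assms(1,3,5) by simp
  next
    case True
    have "2 * card H \<noteq> Suc (card V)"
    proof
      assume "2 * card H = Suc (card V)"
      then obtain x a c where "a \<in> V" "c \<in> V" "a \<noteq> c" "x \<noteq> c"
        and nbhds: "nbhd H V a = {x}" "nbhd H V c = {x}"
        by (rule degree_sum_Suc_card_imp_cherry[OF assms(1,2) True])
      moreover from this have "{a, c} \<notin> H" using mem_nbhd[of c H V a] by simp
      ultimately show False using wide[of a c] nbhds by simp
    qed
    moreover have "card V \<le> 2 * card H" using card_non_isolated_le[OF assms(1,2)] True by simp
    ultimately show ?thesis using assms(3,4) by presburger
  qed
qed

text \<open>If \<open>w\<close> were isolated, \<open>wv\<close> would be a spine for every \<open>v\<close> of degree at most one; by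
  uniqueness and tightness of the spine there is at most one such \<open>v\<close>, leaving too many edges.\<close>

lemma one_book_odd_order_no_isolated:
  assumes "finite V" "H \<subseteq> complete_edges V" "card V = p + 3" "2 \<le> p"
    and one: "card (book_copies p V H) = 1" and size: "2 * card H = Suc (card V)"
  shows "isolated H V = {}"
proof (rule ccontr)
  assume "isolated H V \<noteq> {}"
  then obtain w where w: "w \<in> V" "nbhd H V w = {}" by (auto simp: isolated_def)
  define A where "A = V - {w}"
  define L where "L = {v \<in> A. card (nbhd H V v) \<le> 1}"
  have spine: "book_spine p V H w v" if "v \<in> L" for v
    using that w assms(3) mem_nbhd[of v H V w] by (auto simp: book_spine_def L_def A_def)
  then have tight: "card (nbhd H V v) = 1" if "v \<in> L" for v
    using book_spine_tight[OF assms(1,2) one _ spine[OF that]] w(2) assms(3,4) by simp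
  have deg: "1 \<le> card (nbhd H V v)" if "v \<in> A" for v
    using tight[of v] that by (cases "v \<in> L") (auto simp: L_def)
  have "card L \<le> 1"
  proof -
    have "v = v'" if "v \<in> L" "v' \<in> L" for v v'
      using book_spine_unique[OF assms(1,2) one assms(4) spine[OF that(1)] spine[OF that(2)]]
      by (auto simp: doubleton_eq_iff)
    moreover have "finite L" using assms(1) by (simp add: L_def A_def)
    ultimately show ?thesis by (simp add: card_le_Suc0_iff_eq)
  qed
  have fin: "finite A" using assms(1) by (simp add: A_def)
  have "(\<Sum>x\<in>A. card (nbhd H V x)) = 2 * card H"
    using sum_card_nbhd[OF assms(1,2)] sum.remove[OF assms(1) w(1), of "\<lambda>x. card (nbhd H V x)"] w(2)
    by (simp add: A_def)
  then have "(\<Sum>x\<in>A. card (nbhd H V x) - 1) = 2"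
    using sum_eq_sum_pred_plus_card[of A "\<lambda>x. card (nbhd H V x)"] deg size w(1) assms(1,3)
    by (simp add: A_def)
  moreover have "card (A - L) \<le> (\<Sum>x\<in>A. card (nbhd H V x) - 1)"
  proof -
    have "card (A - L) \<le> (\<Sum>x\<in>A - L. card (nbhd H V x) - 1)"
      using sum_bounded_below[of "A - L" 1 "\<lambda>x. card (nbhd H V x) - 1"] unfolding L_def
      by fastforce
    also have "\<dots> \<le> (\<Sum>x\<in>A. card (nbhd H V x) - 1)" using fin by (intro sum_mono2) auto
    finally show ?thesis .
  qed
  moreover have "card A = p + 2" using w(1) assms(1,3) by (simp add: A_def)
  moreover have "card A - card L \<le> card (A - L)" by (rule diff_card_le_card_Diff) (simp add: fin L_def)
  ultimately show False using \<open>card L \<le> 1\<close> assms(4) by linarith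
qed

lemma one_book_odd_order_structure:
  assumes "finite V" "H \<subseteq> complete_edges V" "card V = p + 3" "2 \<le> p"
    and "card (book_copies p V H) = 1" "2 * card H = Suc (card V)"
  obtains x a c where "x \<in> V" "a \<in> V" "c \<in> V" "a \<noteq> c" "x \<noteq> a" "x \<noteq> c"
    "nbhd H V x = {a, c}" "nbhd H V a = {x}" "nbhd H V c = {x}"
    "\<And>y. y \<in> V - {x, a, c} \<Longrightarrow> card (nbhd H V y) = 1"
  using degree_sum_Suc_card_imp_cherry[OF assms(1,2) one_book_odd_order_no_isolated[OF assms] assms(6)]
  by blast

section \<open>Isomorphisms of complements\<close>

lemma graph_iso_complement:
  assumes "bij_betw f V V'" "\<And>x y. x \<in> V \<Longrightarrow> y \<in> V \<Longrightarrow> {x, y} \<in> H \<longleftrightarrow> {f x, f y} \<in> H'"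
  shows "graph_iso V (complete_edges V - H) V' (complete_edges V' - H')"
  unfolding graph_iso_def
proof (intro exI conjI ballI)
  fix x y assume "x \<in> V" "y \<in> V"
  moreover from this have "f x \<in> V'" "f y \<in> V'" "f x = f y \<longleftrightarrow> x = y"
    using assms(1) by (auto simp: bij_betw_def inj_on_eq_iff)
  ultimately show "{x, y} \<in> complete_edges V - H \<longleftrightarrow> {f x, f y} \<in> complete_edges V' - H'"
    using assms(2) by simp
qed (rule assms(1))

lemma graph_iso_sym: "graph_iso V E V' E' \<Longrightarrow> graph_iso V' E' V E"
  unfolding graph_iso_def
proof (elim exE conjE, intro exI conjI ballI)
  fix f assume f: "bij_betw f V V'" and e: "\<forall>x\<in>V. \<forall>y\<in>V. {x, y} \<in> E \<longleftrightarrow> {f x, f y} \<in> E'"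
  show "bij_betw (inv_into V f) V' V" by (rule bij_betw_inv_into[OF f])
  fix x y assume "x \<in> V'" "y \<in> V'"
  then show "{x, y} \<in> E' \<longleftrightarrow> {inv_into V f x, inv_into V f y} \<in> E"
    using e f by (auto simp: bij_betw_def bij_betw_inv_into_right inv_into_into)
qed

lemma graph_iso_trans: "graph_iso V1 E1 V2 E2 \<Longrightarrow> graph_iso V2 E2 V3 E3 \<Longrightarrow> graph_iso V1 E1 V3 E3"
  unfolding graph_iso_def
proof (elim exE conjE, intro exI conjI ballI)
  fix f g assume f: "bij_betw f V1 V2" "\<forall>x\<in>V1. \<forall>y\<in>V1. {x, y} \<in> E1 \<longleftrightarrow> {f x, f y} \<in> E2"
    and g: "bij_betw g V2 V3" "\<forall>x\<in>V2. \<forall>y\<in>V2. {x, y} \<in> E2 \<longleftrightarrow> {g x, g y} \<in> E3"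
  show "bij_betw (g \<circ> f) V1 V3" using f(1) g(1) by (rule bij_betw_trans)
  fix x y assume "x \<in> V1" "y \<in> V1"
  then show "{x, y} \<in> E1 \<longleftrightarrow> {(g \<circ> f) x, (g \<circ> f) y} \<in> E3"
    using f g by (simp add: bij_betwE)
qed

definition partner :: "nat \<Rightarrow> nat" where
  "partner i = (if even i then i + 1 else i - 1)"

lemma partner_in_range:
  assumes "2 \<le> i" "i < 2 * k + 2"
  shows "2 \<le> partner i" "partner i < 2 * k + 2" "partner i \<noteq> i" "partner (partner i) = i"
  using assms unfolding partner_def by presburger+

lemma involution_conj_partner:
  assumes "finite U" "card U = 2 * k"
    and "\<And>y. y \<in> U \<Longrightarrow> \<sigma> y \<in> U \<and> \<sigma> y \<noteq> y \<and> \<sigma> (\<sigma> y) = y"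
  obtains g where "bij_betw g U {2..<2 * k + 2}" "\<And>y. y \<in> U \<Longrightarrow> g (\<sigma> y) = partner (g y)"
  using assms
proof (induction k arbitrary: U thesis)
  case 0
  then show ?case by (simp add: bij_betw_def)
next
  case (Suc k)
  obtain y0 where y0: "y0 \<in> U" using Suc.prems(3) by fastforce
  have s0: "\<sigma> y0 \<in> U" "\<sigma> y0 \<noteq> y0" using Suc.prems(4)[OF y0] by auto
  define U' where "U' = U - {y0, \<sigma> y0}"
  have fin': "finite U'" using Suc.prems(2) by (simp add: U'_def)
  have card': "card U' = 2 * k"
    using Suc.prems(2,3) y0 s0 unfolding U'_def by (simp add: card_Diff_subset)
  have outside: "\<sigma> y \<notin> {y0, \<sigma> y0}" if "y \<in> U'" for y
    using that Suc.prems(4)[of y] Suc.prems(4)[OF y0] unfolding U'_def by auto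
  have inv': "\<sigma> y \<in> U' \<and> \<sigma> y \<noteq> y \<and> \<sigma> (\<sigma> y) = y" if "y \<in> U'" for y
    using that outside[OF that] Suc.prems(4)[of y] unfolding U'_def by auto
  obtain g' where g': "bij_betw g' U' {2..<2 * k + 2}"
    and comm': "\<And>y. y \<in> U' \<Longrightarrow> g' (\<sigma> y) = partner (g' y)"
    by (rule Suc.IH[OF _ fin' card' inv']) blast
  define g where "g = g'(y0 := 2 * k + 2, \<sigma> y0 := 2 * k + 3)"
  have "bij_betw (g'(y0 := 2 * k + 2)) (insert y0 U') (insert (2 * k + 2) {2..<2 * k + 2})"
    by (rule bij_betw_fun_upd_insert[OF g']) (auto simp: U'_def)
  then have "bij_betw g (insert (\<sigma> y0) (insert y0 U'))
      (insert (2 * k + 3) (insert (2 * k + 2) {2..<2 * k + 2}))"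
    unfolding g_def by (rule bij_betw_fun_upd_insert) (use s0 in \<open>auto simp: U'_def\<close>)
  moreover have "insert (\<sigma> y0) (insert y0 U') = U" using y0 s0 by (auto simp: U'_def)
  moreover have "insert (2 * k + 3) (insert (2 * k + 2) {2..<2 * k + 2}) = {2..<2 * Suc k + 2}"
    by auto
  ultimately have "bij_betw g U {2..<2 * Suc k + 2}" by simp
  moreover have "g (\<sigma> y) = partner (g y)" if y: "y \<in> U" for y
  proof -
    consider "y = y0" | "y = \<sigma> y0" | "y \<in> U'" using y unfolding U'_def by blast
    then show ?thesis
    proof cases
      case 3
      then have "y \<noteq> y0" "y \<noteq> \<sigma> y0" "\<sigma> y \<noteq> y0" "\<sigma> y \<noteq> \<sigma> y0"
        using outside[OF 3] unfolding U'_def by auto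
      then show ?thesis using comm'[OF 3] by (simp add: g_def)
    qed (use s0(2)[symmetric] Suc.prems(4)[OF y0] in \<open>simp_all add: g_def partner_def\<close>)
  qed
  ultimately show ?case using Suc.prems(1) by blast
qed

lemma matching_nbhd_involution:
  assumes "H \<subseteq> complete_edges V" "U \<subseteq> V"
    and matched: "\<And>y. y \<in> U \<Longrightarrow> card (nbhd H V y) = 1 \<and> nbhd H V y \<subseteq> U"
  obtains \<sigma> where "\<And>y. y \<in> U \<Longrightarrow> nbhd H V y = {\<sigma> y}"
    "\<And>y. y \<in> U \<Longrightarrow> \<sigma> y \<in> U \<and> \<sigma> y \<noteq> y \<and> \<sigma> (\<sigma> y) = y"
proof -
  define \<sigma> where "\<sigma> y = the_elem (nbhd H V y)" for y
  have nbhd_U: "nbhd H V y = {\<sigma> y}" if "y \<in> U" for y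
    using matched that unfolding \<sigma>_def by (metis card_1_singletonE the_elem_eq)
  have "\<sigma> y \<in> U \<and> \<sigma> y \<noteq> y \<and> \<sigma> (\<sigma> y) = y" if "y \<in> U" for y
  proof -
    have "\<sigma> y \<in> nbhd H V y" using nbhd_U[OF that] by simp
    moreover from this have "\<sigma> y \<in> U" using matched that by blast
    moreover have "y \<in> nbhd H V (\<sigma> y)"
      using calculation(1) nbhd_sym[of y V "\<sigma> y" H] that assms(2) by blast
    ultimately show ?thesis using nbhd_subset[OF assms(1)] nbhd_U by fastforce
  qed
  then show ?thesis using that nbhd_U by blast
qed

text \<open>Outside \<open>R\<close> the missing edges form a perfect matching; it is mapped onto the pairs
  \<open>{i, partner i}\<close>, and the map is completed by an isomorphism on \<open>R\<close>.\<close>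

lemma graph_iso_complement_glue:
  assumes "finite V" "H \<subseteq> complete_edges V" "R \<subseteq> V" "card (V - R) = 2 * k"
    and matched: "\<And>y. y \<in> V - R \<Longrightarrow> card (nbhd H V y) = 1 \<and> nbhd H V y \<subseteq> V - R"
    and h: "bij_betw h R R'" "\<And>x y. x \<in> R \<Longrightarrow> y \<in> R \<Longrightarrow> {x, y} \<in> H \<longleftrightarrow> {h x, h y} \<in> H'"
    and V': "V' = {2..<2 * k + 2} \<union> R'" "{2..<2 * k + 2} \<inter> R' = {}"
    and matched': "\<And>i. i \<in> {2..<2 * k + 2} \<Longrightarrow> nbhd H' V' i = {partner i}"
  shows "graph_iso V (complete_edges V - H) V' (complete_edges V' - H')"
proof -
  define U where "U = V - R"
  obtain \<sigma> where nbhd_U: "\<And>y. y \<in> U \<Longrightarrow> nbhd H V y = {\<sigma> y}"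
    and inv: "\<And>y. y \<in> U \<Longrightarrow> \<sigma> y \<in> U \<and> \<sigma> y \<noteq> y \<and> \<sigma> (\<sigma> y) = y"
    using matching_nbhd_involution[OF assms(2), of U] matched unfolding U_def by auto
  obtain g where g: "bij_betw g U {2..<2 * k + 2}" "\<And>y. y \<in> U \<Longrightarrow> g (\<sigma> y) = partner (g y)"
    using involution_conj_partner[of U k \<sigma>] assms(1,4) inv unfolding U_def by blast
  define f where "f x = (if x \<in> U then g x else h x)" for x
  have "bij_betw f (U \<union> R) ({2..<2 * k + 2} \<union> R')"
    unfolding f_def by (rule bij_betw_disjoint_Un[OF g(1) h(1)]) (use V'(2) in \<open>auto simp: U_def\<close>)
  moreover have "U \<union> R = V" using assms(3) by (auto simp: U_def)
  ultimately have f: "bij_betw f V V'" using V'(1) by simp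
  have edge_U: "{x, y} \<in> H \<longleftrightarrow> {f x, f y} \<in> H'" if "x \<in> U" "y \<in> V" for x y
  proof -
    have fx: "f x \<in> {2..<2 * k + 2}" "f (\<sigma> x) = partner (f x)"
      using that g inv bij_betwE unfolding f_def by fastforce+
    moreover have "f y \<in> V'" "\<sigma> x \<in> V" using f that inv unfolding U_def by (auto simp: bij_betwE)
    ultimately have "{f x, f y} \<in> H' \<longleftrightarrow> f y \<in> nbhd H' V' (f x)" by (simp add: mem_nbhd)
    also have "\<dots> \<longleftrightarrow> f y = f (\<sigma> x)" using matched' fx by simp
    also have "\<dots> \<longleftrightarrow> y = \<sigma> x" using f that \<open>\<sigma> x \<in> V\<close> by (auto simp: bij_betw_def inj_on_eq_iff)
    also have "\<dots> \<longleftrightarrow> y \<in> nbhd H V x" using nbhd_U[OF that(1)] by auto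
    also have "\<dots> \<longleftrightarrow> {x, y} \<in> H" using that(2) by (simp add: mem_nbhd)
    finally show ?thesis by simp
  qed
  have "{x, y} \<in> H \<longleftrightarrow> {f x, f y} \<in> H'" if "x \<in> V" "y \<in> V" for x y
  proof (cases "x \<in> U \<or> y \<in> U")
    case True
    then show ?thesis using edge_U that by (metis insert_commute)
  next
    case False
    then show ?thesis using h(2) that by (auto simp: U_def f_def)
  qed
  then show ?thesis using graph_iso_complement[OF f] by blast
qed

section \<open>The extremal graphs\<close>

definition matching_edges :: "nat \<Rightarrow> nat set set" where
  "matching_edges k = (\<lambda>m. {2 * m, 2 * m + 1}) ` {1..k}"

lemma mem_matching_edges:
  "{a, b} \<in> matching_edges k \<longleftrightarrow> 2 \<le> a \<and> a < 2 * k + 2 \<and> b = partner a"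
proof
  assume "{a, b} \<in> matching_edges k"
  then obtain m where "1 \<le> m" "m \<le> k" "{a, b} = {2 * m, 2 * m + 1}" unfolding matching_edges_def by auto
  then show "2 \<le> a \<and> a < 2 * k + 2 \<and> b = partner a"
    by (auto simp: doubleton_eq_iff partner_def)
next
  assume a: "2 \<le> a \<and> a < 2 * k + 2 \<and> b = partner a"
  then have "{a, b} = {2 * (a div 2), 2 * (a div 2) + 1}" "a div 2 \<in> {1..k}"
    by (auto simp: partner_def doubleton_eq_iff)
  then show "{a, b} \<in> matching_edges k" unfolding matching_edges_def by blast
qed

lemma finite_matching_edges: "finite (matching_edges k)"
  by (simp add: matching_edges_def)

lemma card_matching_edges: "card (matching_edges k) = k"
proof -
  have "inj_on (\<lambda>m. {2 * m, 2 * m + 1 :: nat}) {1..k}"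
    by (rule inj_onI) (auto simp: doubleton_eq_iff)
  then show ?thesis unfolding matching_edges_def by (simp add: card_image)
qed

lemma matching_edges_subset_complete_edges:
  "2 * k + 2 \<le> n \<Longrightarrow> matching_edges k \<subseteq> complete_edges {0..<n}"
  unfolding matching_edges_def by auto

lemma card_insert_matching_edges: "card (insert {0, 1} (matching_edges k)) = k + 1"
proof -
  have "{0, 1} \<notin> matching_edges k" by (simp add: mem_matching_edges)
  then show ?thesis by (simp add: finite_matching_edges card_matching_edges)
qed

lemma nbhd_matching_edges_Un:
  assumes "{2..<2 * k + 2} \<subseteq> V" "\<And>e. e \<in> X \<Longrightarrow> e \<inter> {2..<2 * k + 2} = {}"
    and "i \<in> {2..<2 * k + 2}"
  shows "nbhd (X \<union> matching_edges k) V i = {partner i}"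
proof -
  have "{i, y} \<notin> X" for y using assms(2)[of "{i, y}"] assms(3) by blast
  moreover have "partner i \<in> V" using partner_in_range[of i k] assms(1,3) by auto
  ultimately show ?thesis using assms(3) by (auto simp: mem_nbhd mem_matching_edges)
qed

lemma
  assumes "p = 2 * k"
  shows isolated_matching_edges: "isolated (matching_edges k) {0..<p+2} = {0, 1}"
    and isolated_perfect_matching: "isolated (insert {0, 1} (matching_edges k)) {0..<p+2} = {}"
proof -
  have range: "{2..<2 * k + 2} \<subseteq> {0..<p+2}" using assms by auto
  have matched: "x \<notin> isolated (X \<union> matching_edges k) {0..<p+2}"
    if "2 \<le> x" "\<And>e. e \<in> X \<Longrightarrow> e \<inter> {2..<2 * k + 2} = {}" for x X
  proof (cases "x < p + 2")
    case True
    then show ?thesis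
      using nbhd_matching_edges_Un[OF range that(2), where i = x] that(1) assms by (simp add: isolated_def)
  qed (simp add: isolated_def)
  have low: "x \<in> isolated (matching_edges k) {0..<p+2}" if "x \<le> 1" for x
    using that by (auto simp: isolated_def nbhd_def mem_matching_edges)
  show "isolated (matching_edges k) {0..<p+2} = {0, 1}"
  proof (intro set_eqI iffI)
    fix x assume "x \<in> isolated (matching_edges k) {0..<p+2}"
    then show "x \<in> {0, 1}" using matched[of x "{}"] by (cases "2 \<le> x") auto
  qed (use low in auto)
  have "x \<notin> isolated (insert {0, 1} (matching_edges k)) {0..<p+2}" for x
  proof (cases "2 \<le> x")
    case True
    then show ?thesis using matched[of x "{{0, 1}}"] by auto
  next
    case False
    then have "x = 0 \<or> x = 1" by auto
    then have "1 - x \<in> nbhd (insert {0, 1} (matching_edges k)) {0..<p+2} x"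
      by (auto simp: mem_nbhd insert_commute)
    then show ?thesis by (auto simp: isolated_def)
  qed
  then show "isolated (insert {0, 1} (matching_edges k)) {0..<p+2} = {}" by blast
qed

lemma book_free_perfect_matching:
  assumes "p = 2 * k"
  shows "book_copies p {0..<p+2} (insert {0, 1} (matching_edges k)) = {}"
proof -
  have "insert {0, 1} (matching_edges k) \<subseteq> complete_edges {0..<p+2}"
    using matching_edges_subset_complete_edges[of k "p + 2"] assms by simp
  moreover have "\<not> book_spine p {0..<p+2} (insert {0, 1} (matching_edges k)) u v" for u v
    using book_spine_even_order_imp_isolated[of "{0..<p+2}" p _ u v] isolated_perfect_matching[OF assms]
    by auto
  ultimately show ?thesis using book_copies_eq_empty_iff[of "{0..<p+2}" _ p] by simp
qed

lemma one_book_matching: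
  assumes "p = 2 * k"
  shows "card (book_copies p {0..<p+2} (matching_edges k)) = 1"
proof -
  let ?V = "{0..<p+2}" and ?M = "matching_edges k"
  have iso: "isolated ?M ?V = {0, 1}" by (rule isolated_matching_edges[OF assms])
  have M: "?M \<subseteq> complete_edges ?V" using matching_edges_subset_complete_edges assms by simp
  have spine: "book_spine p ?V ?M 0 1" using iso by (intro book_spine_of_isolated) auto
  have "{u, v} = {0, 1}" if "book_spine p ?V ?M u v" for u v
    using book_spine_even_order_imp_isolated[OF _ _ that] iso that
    by (auto simp: book_spine_def doubleton_eq_iff)
  moreover have "nbhd ?M ?V 0 = {}" "nbhd ?M ?V 1 = {}" using iso by (auto simp: isolated_def)
  ultimately show ?thesis using card_book_copies_eq_1[OF _ M spine] by simp
qed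

definition cherry_edges :: "nat \<Rightarrow> nat set set" where
  "cherry_edges k = insert {0, 2 * k + 2} (insert {1, 2 * k + 2} (matching_edges k))"

lemma cherry_edges_subset_complete_edges: "cherry_edges k \<subseteq> complete_edges {0..<2 * k + 3}"
  using matching_edges_subset_complete_edges[of k "2 * k + 3"] by (simp add: cherry_edges_def)

lemma card_cherry_edges: "card (cherry_edges k) = k + 2"
proof -
  have "{1, 2 * k + 2} \<notin> matching_edges k" "{0, 2 * k + 2} \<notin> insert {1, 2 * k + 2} (matching_edges k)"
    by (simp_all add: mem_matching_edges doubleton_eq_iff)
  then show ?thesis by (simp add: cherry_edges_def finite_matching_edges card_matching_edges)
qed

lemma card_insert_cherry_edges: "card (insert {0, 1} (cherry_edges k)) = k + 3"
proof -
  have "{0, 1} \<notin> cherry_edges k" by (simp add: cherry_edges_def mem_matching_edges doubleton_eq_iff)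
  moreover have "finite (cherry_edges k)" by (simp add: cherry_edges_def finite_matching_edges)
  ultimately show ?thesis by (simp add: card_cherry_edges)
qed

lemma nbhd_cherry_edges:
  assumes "p = 2 * k"
  shows "x \<le> 1 \<Longrightarrow> nbhd (cherry_edges k) {0..<p+3} x = {2 * k + 2}"
    and "nbhd (cherry_edges k) {0..<p+3} (2 * k + 2) = {0, 1}"
  using assms by (auto simp: nbhd_def cherry_edges_def mem_matching_edges doubleton_eq_iff)

lemma card_nbhd_Un_ge_2_of_cherry:
  assumes H: "cherry_edges k \<subseteq> H" and "u < 2 * k + 3" "v < 2 * k + 3" "u \<noteq> v"
    and "\<not> (u \<le> 1 \<and> v \<le> 1)"
  shows "2 \<le> card (nbhd H {0..<2 * k + 3} u \<union> nbhd H {0..<2 * k + 3} v)"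
proof -
  let ?V = "{0..<2 * k + 3}" and ?c = "2 * k + 2"
  let ?N = "\<lambda>x. nbhd H ?V x"
  have fin: "finite (?N u \<union> ?N v)" using finite_nbhd[of ?V] by simp
  have apex: "?c \<in> ?N x" if "x \<le> 1" for x
    using that H by (auto simp: mem_nbhd cherry_edges_def le_Suc_eq)
  have leaves: "0 \<in> ?N ?c" "1 \<in> ?N ?c"
    using H by (auto simp: mem_nbhd cherry_edges_def insert_commute)
  have matched: "partner x \<in> ?N x" "partner x < ?c" if "2 \<le> x" "x < ?c" for x
    using that H partner_in_range[OF that] by (auto simp: mem_nbhd cherry_edges_def mem_matching_edges)
  consider "u = ?c \<or> v = ?c" | "2 \<le> u" "u < ?c" "2 \<le> v" "v < ?c"
    | "2 \<le> u" "u < ?c" "v \<le> 1" | "2 \<le> v" "v < ?c" "u \<le> 1"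
    using assms(2-5) by linarith
  then show ?thesis
  proof cases
    case 1
    then show ?thesis using two_le_card_of_mem[OF fin, of 0 1] leaves by auto
  next
    case 2
    then have "partner u \<noteq> partner v" using assms(4) partner_in_range by metis
    then show ?thesis using two_le_card_of_mem[OF fin] matched 2 by blast
  next
    case 3
    then show ?thesis using two_le_card_of_mem[OF fin, of "partner u" ?c] matched apex by fastforce
  next
    case 4
    then show ?thesis using two_le_card_of_mem[OF fin, of "partner v" ?c] matched apex by fastforce
  qed
qed

lemma book_spine_odd_order_imp_low:
  assumes "cherry_edges k \<subseteq> H" "p = 2 * k" "book_spine p {0..<p+3} H u v"
  shows "u \<le> 1" "v \<le> 1"
  using card_nbhd_Un_ge_2_of_cherry[OF assms(1), of u v] assms(2,3)
  by (auto simp: book_spine_def)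

lemma book_free_triangle:
  assumes "p = 2 * k"
  shows "book_copies p {0..<p+3} (insert {0, 1} (cherry_edges k)) = {}"
proof -
  let ?H = "insert {0, 1} (cherry_edges k)"
  have "\<not> book_spine p {0..<p+3} ?H u v" for u v
  proof
    assume spine: "book_spine p {0..<p+3} ?H u v"
    have "cherry_edges k \<subseteq> ?H" by blast
    then have "u \<le> 1" "v \<le> 1" using book_spine_odd_order_imp_low[OF _ assms spine] by auto
    then show False using spine by (auto simp: book_spine_def le_Suc_eq insert_commute)
  qed
  moreover have "?H \<subseteq> complete_edges {0..<p+3}"
    using cherry_edges_subset_complete_edges[of k] assms by simp
  ultimately show ?thesis using book_copies_eq_empty_iff[of "{0..<p+3}" ?H p] by simp
qed

lemma one_book_cherry:
  assumes "p = 2 * k"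
  shows "card (book_copies p {0..<p+3} (cherry_edges k)) = 1"
proof -
  let ?V = "{0..<p+3}" and ?H = "cherry_edges k"
  have H: "?H \<subseteq> complete_edges ?V" using cherry_edges_subset_complete_edges[of k] assms by simp
  have N: "nbhd ?H ?V 0 \<union> nbhd ?H ?V 1 = {2 * k + 2}" using nbhd_cherry_edges(1)[OF assms] by simp
  have spine: "book_spine p ?V ?H 0 1"
    using N by (simp add: book_spine_def cherry_edges_def mem_matching_edges doubleton_eq_iff)
  have "{u, v} = {0, 1}" if "book_spine p ?V ?H u v" for u v
    using book_spine_odd_order_imp_low[OF _ assms that] that
    by (auto simp: book_spine_def le_Suc_eq doubleton_eq_iff)
  then show ?thesis using card_book_copies_eq_1[OF _ H spine] N by simp
qed

section \<open>Turan numbers and uniqueness\<close>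

lemma ex_eq_of_complement_bound:
  fixes VH :: "'b set" and EH :: "'b set set"
  assumes lower: "\<And>H. H \<subseteq> complete_edges {0..<n} \<Longrightarrow>
      copies VH EH {0..<n} (complete_edges {0..<n} - H) = {} \<Longrightarrow> m \<le> card H"
    and H0: "H0 \<subseteq> complete_edges {0..<n}" "card H0 = m"
      "copies VH EH {0..<n} (complete_edges {0..<n} - H0) = {}"
  shows "ex n VH EH + m = n choose 2"
proof -
  let ?K = "complete_edges {0..<n}"
  let ?sizes = "{card E | E. graph {0..<n} E \<and> copies VH EH {0..<n} E = {}}"
  have "ex n VH EH = (n choose 2) - m"
    unfolding ex_def
  proof (rule Max_eqI)
    have "?sizes \<subseteq> card ` Pow ?K" by (auto simp: graph_iff_subset_complete_edges)
    then show "finite ?sizes" using finite_complete_edges[of "{0..<n}"] finite_subset by blast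
    fix y assume "y \<in> ?sizes"
    then obtain E where E: "y = card E" "E \<subseteq> ?K" "copies VH EH {0..<n} E = {}"
      by (auto simp: graph_iff_subset_complete_edges)
    then have "E = ?K - (?K - E)" by blast
    then have "m \<le> card (?K - E)" using lower[of "?K - E"] E(3) by simp
    then show "y \<le> (n choose 2) - m"
      using card_complete_edges_Diff[of "{0..<n}" "?K - E"] \<open>E = ?K - (?K - E)\<close> E(1) by simp
  next
    show "(n choose 2) - m \<in> ?sizes"
      using card_complete_edges_Diff[of "{0..<n}" H0] graph_complete_edges_Diff[of "{0..<n}" H0] H0
      by (intro CollectI exI[of _ "?K - H0"]) simp
  qed
  moreover have "m \<le> n choose 2" using card_le_choose_2[of "{0..<n}" H0] H0 by simp
  ultimately show ?thesis by simp
qed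

lemma ex_even_order:
  assumes "p = 2 * k"
  shows "ex (p + 2) (book_V p) (book_E p) + (k + 1) = (p + 2) choose 2"
proof (rule ex_eq_of_complement_bound)
  fix H assume "H \<subseteq> complete_edges {0..<p + 2}" "book_copies p {0..<p + 2} H = {}"
  then show "k + 1 \<le> card H" using book_free_even_order_card_ge[of "{0..<p+2}" H p] assms by simp
next
  show "insert {0, 1} (matching_edges k) \<subseteq> complete_edges {0..<p + 2}"
    using matching_edges_subset_complete_edges[of k "p + 2"] assms by simp
qed (use card_insert_matching_edges book_free_perfect_matching[OF assms] in simp_all)

lemma ex_odd_order:
  assumes "p = 2 * k" "0 < p"
  shows "ex (p + 3) (book_V p) (book_E p) + (k + 3) = (p + 3) choose 2"
proof (rule ex_eq_of_complement_bound)
  fix H assume "H \<subseteq> complete_edges {0..<p + 3}" "book_copies p {0..<p + 3} H = {}"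
  then show "k + 3 \<le> card H" using book_free_odd_order_card_ge[of "{0..<p+3}" H p] assms by simp
next
  show "insert {0, 1} (cherry_edges k) \<subseteq> complete_edges {0..<p + 3}"
    using cherry_edges_subset_complete_edges[of k] assms by simp
qed (use card_insert_cherry_edges book_free_triangle[OF assms(1)] in simp_all)

lemma extremal_one_book_complement:
  assumes "extremal_one_book p n V E" "ex n (book_V p) (book_E p) + m = n choose 2"
  shows "finite V" "card V = n" "complete_edges V - E \<subseteq> complete_edges V"
    "E = complete_edges V - (complete_edges V - E)" "card (complete_edges V - E) + 1 = m"
    "card (book_copies p V (complete_edges V - E)) = 1"
proof -
  have G: "finite V" "E \<subseteq> complete_edges V" and n: "card V = n"
    and cE: "card E = ex n (book_V p) (book_E p) + 1"
    and one: "card (copies (book_V p) (book_E p) V E) = 1"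
    using assms(1) by (auto simp: extremal_one_book_def num_copies_def graph_iff_subset_complete_edges)
  show "finite V" "card V = n" "complete_edges V - E \<subseteq> complete_edges V" by (simp_all add: G n)
  show E: "E = complete_edges V - (complete_edges V - E)" using G by blast
  have "card E \<le> n choose 2" using card_le_choose_2[OF G] n by simp
  then show "card (complete_edges V - E) + 1 = m"
    using card_complete_edges_Diff[OF G(1), of "complete_edges V - E"] E cE assms(2) n by simp
  show "card (book_copies p V (complete_edges V - E)) = 1" using one E by simp
qed

lemma extremal_one_book_complementI:
  assumes "finite V" "card V = n" "H \<subseteq> complete_edges V"
    and "ex n (book_V p) (book_E p) + m = n choose 2" "card H + 1 = m"
    and "card (book_copies p V H) = 1"
  shows "extremal_one_book p n V (complete_edges V - H)"
  using assms card_complete_edges_Diff[OF assms(1,3)] graph_complete_edges_Diff[OF assms(1)]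
  by (simp add: extremal_one_book_def num_copies_def)

lemma extremal_even_order_iso:
  assumes p: "p = 2 * k" "2 \<le> p" and ext: "extremal_one_book p (p + 2) V E"
  shows "graph_iso V E {0..<p+2} (complete_edges {0..<p+2} - matching_edges k)"
proof -
  define H where "H = complete_edges V - E"
  note facts = extremal_one_book_complement[OF ext ex_even_order[OF p(1)], folded H_def]
  obtain u v where uv: "u \<in> V" "v \<in> V" "u \<noteq> v" "isolated H V = {u, v}"
    and deg: "\<And>y. y \<in> V - {u, v} \<Longrightarrow> card (nbhd H V y) = 1"
    using one_book_even_order_structure[OF facts(1,3,2) p(2) facts(6)] facts(5) p(1) by auto
  have iso: "nbhd H V x = {}" if "x \<in> {u, v}" for x using uv(4) that by (auto simp: isolated_def)
  have "graph_iso V (complete_edges V - H) {0..<p+2} (complete_edges {0..<p+2} - matching_edges k)"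
  proof (rule graph_iso_complement_glue[of V H "{u, v}" k "\<lambda>x. if x = u then 0 else 1" "{0, 1}"])
    show "card (V - {u, v}) = 2 * k" using uv facts(1,2) p(1) by (simp add: card_Diff_subset)
    show "card (nbhd H V y) = 1 \<and> nbhd H V y \<subseteq> V - {u, v}" if "y \<in> V - {u, v}" for y
      using deg[OF that] iso that nbhd_sym[of y V _ H] by (auto simp: nbhd_def)
    show "bij_betw (\<lambda>x. if x = u then 0 else 1) {u, v} {0, 1::nat}"
      using uv(3) by (auto simp: bij_betw_def inj_on_def)
    show "{x, y} \<in> H \<longleftrightarrow> {if x = u then 0 else 1, if y = u then 0 else 1} \<in> matching_edges k"
      if "x \<in> {u, v}" "y \<in> {u, v}" for x y
    proof -
      have "{x, y} \<notin> H" using mem_nbhd[of y H V x] iso[OF that(1)] that uv by auto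
      then show ?thesis by (simp add: mem_matching_edges)
    qed
    show "nbhd (matching_edges k) {0..<p+2} i = {partner i}" if "i \<in> {2..<2 * k + 2}" for i
      using nbhd_matching_edges_Un[of k "{0..<p+2}" "{}" i] that p(1) by auto
    show "{0..<p+2} = {2..<2 * k + 2} \<union> {0, 1}" using p(1) by auto
  qed (use facts(1,3) uv in auto)
  then show ?thesis using facts(4) by simp
qed

lemma extremal_odd_order_iso:
  assumes p: "p = 2 * k" "2 \<le> p" and ext: "extremal_one_book p (p + 3) V E"
  shows "graph_iso V E {0..<p+3} (complete_edges {0..<p+3} - cherry_edges k)"
proof -
  define H where "H = complete_edges V - E"
  let ?c = "2 * k + 2"
  have "0 < p" using p(2) by simp
  note facts = extremal_one_book_complement[OF ext ex_odd_order[OF p(1) this], folded H_def]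
  obtain x a c where xac: "x \<in> V" "a \<in> V" "c \<in> V" "a \<noteq> c" "x \<noteq> a" "x \<noteq> c"
    and N: "nbhd H V x = {a, c}" "nbhd H V a = {x}" "nbhd H V c = {x}"
    and deg: "\<And>y. y \<in> V - {x, a, c} \<Longrightarrow> card (nbhd H V y) = 1"
    using one_book_odd_order_structure[OF facts(1,3,2) p(2) facts(6)] facts(2,5) p by auto
  define h where "h z = (if z = a then 0 else if z = c then 1 else ?c)" for z
  have h: "h x = ?c" "h a = 0" "h c = 1" using xac by (auto simp: h_def)
  have "graph_iso V (complete_edges V - H) {0..<p+3} (complete_edges {0..<p+3} - cherry_edges k)"
  proof (rule graph_iso_complement_glue[of V H "{x, a, c}" k h "{0, 1, ?c}"])
    show "card (V - {x, a, c}) = 2 * k" using xac facts(1,2) p(1) by (simp add: card_Diff_subset)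
    show "card (nbhd H V y) = 1 \<and> nbhd H V y \<subseteq> V - {x, a, c}" if "y \<in> V - {x, a, c}" for y
      using deg[OF that] N that nbhd_sym[of y V _ H] by (auto simp: nbhd_def)
    show "bij_betw h {x, a, c} {0, 1, ?c}"
      using xac h by (auto simp: bij_betw_def inj_on_def h_def)
    show "{z, w} \<in> H \<longleftrightarrow> {h z, h w} \<in> cherry_edges k" if "z \<in> {x, a, c}" "w \<in> {x, a, c}" for z w
    proof -
      have "{z, w} \<in> H \<longleftrightarrow> w \<in> nbhd H V z" using that xac by (auto simp: mem_nbhd)
      moreover have "{h z, h w} \<in> cherry_edges k \<longleftrightarrow> h w \<in> nbhd (cherry_edges k) {0..<p+3} (h z)"
        using that h p(1) by (auto simp: mem_nbhd)
      ultimately show ?thesis using that xac N h nbhd_cherry_edges[OF p(1)] by auto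
    qed
    show "nbhd (cherry_edges k) {0..<p+3} i = {partner i}" if "i \<in> {2..<2 * k + 2}" for i
    proof -
      have range: "{2..<2 * k + 2} \<subseteq> {0..<p+3}" using p(1) by auto
      have disj: "e \<inter> {2..<2 * k + 2} = {}" if "e \<in> {{0, ?c}, {1, ?c}}" for e using that by auto
      from nbhd_matching_edges_Un[where X = "{{0, ?c}, {1, ?c}}", OF range disj that]
      show ?thesis by (simp add: cherry_edges_def)
    qed
    show "{0..<p+3} = {2..<2 * k + 2} \<union> {0, 1, ?c}" using p(1) by auto
  qed (use facts(1,3) xac in auto)
  then show ?thesis using facts(4) by simp
qed

lemma exists_unique_up_to_iso:
  assumes "P V0 E0" "\<And>V E. P V E \<Longrightarrow> graph_iso V E V0 E0"
  shows "(\<exists>V E. P V E) \<and> (\<forall>V1 E1 V2 E2. P V1 E1 \<and> P V2 E2 \<longrightarrow> graph_iso V1 E1 V2 E2)"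
  using assms graph_iso_sym graph_iso_trans by blast

theorem theorem2:
  fixes p :: nat
  assumes "p > 0" and "even p"
  shows "\<forall>n \<in> {p + 2, p + 3}.
           (\<exists>(V :: nat set) E. extremal_one_book p n V E) \<and>
           (\<forall>(V1 :: nat set) E1 (V2 :: nat set) E2.
              extremal_one_book p n V1 E1 \<and> extremal_one_book p n V2 E2 \<longrightarrow>
              graph_iso V1 E1 V2 E2)"
proof -
  obtain k where p: "p = 2 * k" "2 \<le> p" using assms by (auto elim: evenE)
  have "extremal_one_book p (p + 2) {0..<p+2} (complete_edges {0..<p+2} - matching_edges k)"
    using extremal_one_book_complementI[OF _ _ _ ex_even_order[OF p(1)] _ one_book_matching[OF p(1)]]
      matching_edges_subset_complete_edges[of k "p + 2"] card_matching_edges[of k] p by simp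
  moreover have "extremal_one_book p (p + 3) {0..<p+3} (complete_edges {0..<p+3} - cherry_edges k)"
    using extremal_one_book_complementI[OF _ _ _ ex_odd_order[OF p(1) assms(1)] _ one_book_cherry[OF p(1)]]
      cherry_edges_subset_complete_edges[of k] card_cherry_edges[of k] p by simp
  ultimately show ?thesis
    using exists_unique_up_to_iso extremal_even_order_iso[OF p] extremal_odd_order_iso[OF p] by blast
qed

end
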